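(* Let $n\geq 2$ and let $L'_n$ be the graph of the $\alpha,\omega$-dicyclobutadieno derivative of $[n-1]$-phenylene (defined in the context). Then the base polynomial counting distances between pairs consisting of a degree-2 vertex and a degree-3 vertex of $L'_n$ is \begin{eqnarray*} H^{2,3}_{b}(L'_{n}) &=& 4nx+4\sum_{k=2}^{n-1}(n-k+2)x^{3k-2}+4\sum_{k=1}^{n-1}(2n-2k)x^{3k-1}\\ &&+4\sum_{k=1}^{n-1}(n-k)x^{3k}+4x^{3n-2}. \end{eqnarray*}
   Context: All graphs are finite, simple and connected; $d(u,v)$ denotes the shortest-path distance and $d_u$ the degree of a vertex $u$. For a graph $G$ and degrees $p\le q$, the base polynomial is $H^{p,q}_{b}(G)=\sum x^{d(u,v)}$, where the sum runs over all unordered pairs $\{u,v\}$ of distinct vertices of $G$ such that one of $u,v$ has degree $p$ and the other has degree $q$. Construction of $L'_n$ ($n\ge 2$): take $n-1$ hexagons $H_1,\dots,H_{n-1}$, hexagon $H_i$ being the 6-cycle $a_i b_i c_i d_i e_i f_i a_i$, and for $i=1,\dots,n-2$ add edges $b_i f_{i+1}$ and $c_i e_{i+1}$ (so consecutive hexagons are joined by the 4-cycle $b_i c_i e_{i+1} f_{i+1}$). Then add four new vertices $p,q,r,s$ with edges $pq$, $pf_1$, $qe_1$ (forming the 4-cycle $f_1 e_1 q p$) and $rs$, $rb_{n-1}$, $sc_{n-1}$ (forming the 4-cycle $b_{n-1} c_{n-1} s r$). Thus $L'_n$ has $n-1$ hexagons and $n$ squares, $2n+2$ vertices of degree 2 and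 $4n-4$ vertices of degree 3. *)

theory Defs
  imports "HOL-Computational_Algebra.Polynomial"
begin

definition is_walk :: "'a set \<Rightarrow> ('a \<Rightarrow> 'a \<Rightarrow> bool) \<Rightarrow> 'a list \<Rightarrow> 'a \<Rightarrow> 'a \<Rightarrow> bool" where
  "is_walk V E xs u v \<longleftrightarrow> xs \<noteq> [] \<and> hd xs = u \<and> last xs = v \<and> set xs \<subseteq> V \<and>
     (\<forall>i < length xs - 1. E (xs ! i) (xs ! Suc i))"

definition gdist :: "'a set \<Rightarrow> ('a \<Rightarrow> 'a \<Rightarrow> bool) \<Rightarrow> 'a \<Rightarrow> 'a \<Rightarrow> nat" where
  "gdist V E u v = (LEAST k. \<exists>xs. is_walk V E xs u v \<and> length xs = Suc k)"

definition gdeg :: "'a set \<Rightarrow> ('a \<Rightarrow> 'a \<Rightarrow> bool) \<Rightarrow> 'a \<Rightarrow> nat" where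
  "gdeg V E u = card {v \<in> V. E u v}"

definition deg_pairs :: "'a set \<Rightarrow> ('a \<Rightarrow> 'a \<Rightarrow> bool) \<Rightarrow> nat \<Rightarrow> nat \<Rightarrow> 'a set set" where
  "deg_pairs V E p q = {{u, v} | u v. u \<in> V \<and> v \<in> V \<and> u \<noteq> v \<and>
      gdeg V E u = p \<and> gdeg V E v = q}"

definition base_poly :: "'a set \<Rightarrow> ('a \<Rightarrow> 'a \<Rightarrow> bool) \<Rightarrow> nat \<Rightarrow> nat \<Rightarrow> nat poly" where
  "base_poly V E p q = (\<Sum>e \<in> deg_pairs V E p q.
      monom 1 (THE k. \<exists>u v. e = {u, v} \<and> k = gdist V E u v))"

datatype vtx = Av nat | Bv nat | Cv nat | Dv nat | Ev nat | Fv nat | Pv | Qv | Rv | Sv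

definition Lverts :: "nat \<Rightarrow> vtx set" where
  "Lverts n = (\<Union>i\<in>{1..n-1}. {Av i, Bv i, Cv i, Dv i, Ev i, Fv i}) \<union> {Pv, Qv, Rv, Sv}"

definition Ledges :: "nat \<Rightarrow> (vtx \<times> vtx) set" where
  "Ledges n =
     (\<Union>i\<in>{1..n-1}. {(Av i, Bv i), (Bv i, Cv i), (Cv i, Dv i), (Dv i, Ev i), (Ev i, Fv i), (Fv i, Av i)})
   \<union> (\<Union>i\<in>{1..n-2}. {(Bv i, Fv (Suc i)), (Cv i, Ev (Suc i))})
   \<union> {(Pv, Qv), (Pv, Fv 1), (Qv, Ev 1), (Rv, Sv), (Rv, Bv (n-1)), (Sv, Cv (n-1))}"

definition Ladj :: "nat \<Rightarrow> vtx \<Rightarrow> vtx \<Rightarrow> bool" where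
  "Ladj n u v \<longleftrightarrow> (u, v) \<in> Ledges n \<or> (v, u) \<in> Ledges n"

end

theory Submission
  imports Defs
begin

(* Place the vertices of L'_n on two rails at the positions 0, ..., m with m = 3n - 2: hexagon i
   occupies the positions 3i - 2, 3i - 1, 3i (f_i, a_i, b_i on one rail, e_i, d_i, c_i on the
   other), the vertices p, q sit at position 0 and r, s at position m. This identifies L'_n with a
   ladder whose rungs are exactly at the positions not congruent to 2 mod 3. Its degree-2 vertices
   lie at 0, m and the positions congruent to 2, its degree-3 vertices at the remaining inner
   positions. A degree-2 and a degree-3 position never coincide, so the distance between vertices
   at such positions k and l is |k - l| on a common rail and |k - l| + 1 across; hence
   H = 2(1 + x) \<Sum> x^|k - l|, summed over degree-2 positions k and degree-3 positions l. The
   reflection k \<mapsto> m - k exchanges the pairs with k > l and those with k < l, and the sum over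
   the latter is evaluated by induction on n. *)

lemma is_walk_potential_bound:
  assumes walk: "is_walk V E xs u v" and "D u = 0"
    and lipschitz: "\<And>y z. y \<in> V \<Longrightarrow> z \<in> V \<Longrightarrow> E y z \<Longrightarrow> D z \<le> D y + 1"
  shows "D v < length xs"
proof -
  have "D (xs ! i) \<le> i" if "i < length xs" for i
    using that
  proof (induction i)
    case 0
    then show ?case using walk \<open>D u = 0\<close> by (auto simp: is_walk_def hd_conv_nth)
  next
    case (Suc i)
    have "xs ! i \<in> V" "xs ! Suc i \<in> V" "E (xs ! i) (xs ! Suc i)"
      using walk Suc.prems by (auto simp: is_walk_def dest: nth_mem)
    then show ?case using lipschitz Suc by fastforce
  qed
  moreover have "xs \<noteq> []" "last xs = v" using walk by (auto simp: is_walk_def)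
  ultimately have "D v \<le> length xs - 1" by (auto simp: last_conv_nth)
  then show ?thesis using \<open>xs \<noteq> []\<close> by (cases xs) auto
qed

lemma is_walk_snoc:
  assumes walk: "is_walk V E xs u v" and "w \<in> V" "E v w"
  shows "is_walk V E (xs @ [w]) u w"
proof -
  have "E ((xs @ [w]) ! i) ((xs @ [w]) ! Suc i)" if "i < length xs" for i
  proof (cases "Suc i < length xs")
    case True
    then show ?thesis using walk by (auto simp: is_walk_def nth_append)
  next
    case False
    then have "i = length xs - 1" using that by simp
    then show ?thesis using walk \<open>E v w\<close> that by (auto simp: is_walk_def nth_append last_conv_nth)
  qed
  then show ?thesis using walk \<open>w \<in> V\<close> unfolding is_walk_def by auto
qed

lemma is_walk_of_potential:
  assumes "u \<in> V" and zero: "\<And>v. v \<in> V \<Longrightarrow> D v = 0 \<Longrightarrow> v = u"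
    and descent: "\<And>y. y \<in> V \<Longrightarrow> D y > 0 \<Longrightarrow> \<exists>z\<in>V. E z y \<and> D z + 1 = D y"
    and "v \<in> V"
  shows "\<exists>xs. is_walk V E xs u v \<and> length xs = Suc (D v)"
  using \<open>v \<in> V\<close>
proof (induction "D v" arbitrary: v)
  case 0
  then have "v = u" using zero by auto
  then show ?case using 0 \<open>u \<in> V\<close> by (intro exI[of _ "[u]"]) (auto simp: is_walk_def)
next
  case (Suc k)
  then obtain z where z: "z \<in> V" "E z v" "D z + 1 = D v" using descent[of v] by auto
  then have "k = D z" using Suc.hyps(2) by simp
  then obtain xs where "is_walk V E xs u z" "length xs = Suc (D z)" using Suc.hyps(1) z(1) by blast
  then show ?case using is_walk_snoc[of V E xs u z v] Suc.prems z by auto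
qed

lemma gdist_eqI:
  assumes "u \<in> V" "v \<in> V" "D u = 0"
    and "\<And>w. w \<in> V \<Longrightarrow> D w = 0 \<Longrightarrow> w = u"
    and "\<And>y z. y \<in> V \<Longrightarrow> z \<in> V \<Longrightarrow> E y z \<Longrightarrow> D z \<le> D y + 1"
    and "\<And>y. y \<in> V \<Longrightarrow> D y > 0 \<Longrightarrow> \<exists>z\<in>V. E z y \<and> D z + 1 = D y"
  shows "gdist V E u v = D v"
  unfolding gdist_def
proof (rule Least_equality)
  show "\<exists>xs. is_walk V E xs u v \<and> length xs = Suc (D v)"
    by (rule is_walk_of_potential[OF assms(1,4,6,2)])
next
  fix k assume "\<exists>xs. is_walk V E xs u v \<and> length xs = Suc k"
  then obtain xs where "is_walk V E xs u v" "length xs = Suc k" by blast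
  then show "D v \<le> k" using is_walk_potential_bound[of V E xs u v D] assms(3,5) by fastforce
qed

lemma is_walk_map:
  assumes walk: "is_walk V E xs u v" and "f ` V \<subseteq> W"
    and hom: "\<And>x y. x \<in> V \<Longrightarrow> y \<in> V \<Longrightarrow> E x y \<Longrightarrow> E' (f x) (f y)"
  shows "is_walk W E' (map f xs) (f u) (f v)"
proof -
  have "E' (map f xs ! i) (map f xs ! Suc i)" if "i < length xs - 1" for i
  proof -
    have "xs ! i \<in> V" "xs ! Suc i \<in> V" "E (xs ! i) (xs ! Suc i)"
      using walk that by (auto simp: is_walk_def dest!: nth_mem)
    then show ?thesis using hom that by auto
  qed
  then show ?thesis using walk \<open>f ` V \<subseteq> W\<close> unfolding is_walk_def by (auto simp: hd_map last_map)
qed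

lemma gdist_bij_betw:
  assumes bij: "bij_betw f V W" and adj: "\<And>x y. x \<in> V \<Longrightarrow> y \<in> V \<Longrightarrow> E' (f x) (f y) = E x y"
    and "u \<in> V" "v \<in> V"
  shows "gdist W E' (f u) (f v) = gdist V E u v"
proof -
  define g where "g = inv_into V f"
  have fV: "f ` V = W" using bij by (simp add: bij_betw_def)
  have gW: "g ` W \<subseteq> V" and fg: "\<And>w. w \<in> W \<Longrightarrow> f (g w) = w"
    and gf: "\<And>x. x \<in> V \<Longrightarrow> g (f x) = x"
    using bij unfolding g_def by (auto simp: bij_betw_def inv_into_into f_inv_into_f)
  have "(\<exists>ys. is_walk W E' ys (f u) (f v) \<and> length ys = Suc k)
      \<longleftrightarrow> (\<exists>xs. is_walk V E xs u v \<and> length xs = Suc k)" for k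
  proof
    assume "\<exists>ys. is_walk W E' ys (f u) (f v) \<and> length ys = Suc k"
    then obtain ys where ys: "is_walk W E' ys (f u) (f v)" "length ys = Suc k" by blast
    have "E (g x) (g y)" if "x \<in> W" "y \<in> W" "E' x y" for x y
      using adj[of "g x" "g y"] that gW fg by auto
    then have "is_walk V E (map g ys) (g (f u)) (g (f v))"
      using is_walk_map[OF ys(1) gW] by blast
    then show "\<exists>xs. is_walk V E xs u v \<and> length xs = Suc k"
      using gf \<open>u \<in> V\<close> \<open>v \<in> V\<close> ys(2) by (intro exI[of _ "map g ys"]) auto
  next
    assume "\<exists>xs. is_walk V E xs u v \<and> length xs = Suc k"
    then obtain xs where "is_walk V E xs u v" "length xs = Suc k" by blast
    then show "\<exists>ys. is_walk W E' ys (f u) (f v) \<and> length ys = Suc k"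
      using is_walk_map[of V E xs u v f W E'] fV adj by (intro exI[of _ "map f xs"]) auto
  qed
  then show ?thesis unfolding gdist_def by simp
qed

lemma gdeg_bij_betw:
  assumes bij: "bij_betw f V W" and adj: "\<And>x y. x \<in> V \<Longrightarrow> y \<in> V \<Longrightarrow> E' (f x) (f y) = E x y"
    and "u \<in> V"
  shows "gdeg W E' (f u) = gdeg V E u"
proof -
  have "{w \<in> W. E' (f u) w} = f ` {v \<in> V. E u v}"
    using bij adj \<open>u \<in> V\<close> by (auto simp: bij_betw_def)
  moreover have "inj_on f {v \<in> V. E u v}"
    using bij by (auto simp: bij_betw_def intro: inj_on_subset)
  ultimately show ?thesis unfolding gdeg_def by (simp add: card_image)
qed

lemma deg_pairs_bij_betw:
  assumes bij: "bij_betw f V W" and adj: "\<And>x y. x \<in> V \<Longrightarrow> y \<in> V \<Longrightarrow> E' (f x) (f y) = E x y"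
  shows "deg_pairs W E' p q = (\<lambda>e. f ` e) ` deg_pairs V E p q"
proof
  have inj: "inj_on f V" and fV: "f ` V = W" using bij by (auto simp: bij_betw_def)
  have deg: "\<And>u. u \<in> V \<Longrightarrow> gdeg W E' (f u) = gdeg V E u"
    using gdeg_bij_betw[of f V W E' E, OF bij adj] .
  show "deg_pairs W E' p q \<subseteq> (\<lambda>e. f ` e) ` deg_pairs V E p q"
  proof
    fix e assume "e \<in> deg_pairs W E' p q"
    then obtain u' v' where e: "e = {u', v'}" "u' \<in> W" "v' \<in> W" "u' \<noteq> v'"
      "gdeg W E' u' = p" "gdeg W E' v' = q"
      unfolding deg_pairs_def by blast
    then obtain u v where uv: "u \<in> V" "v \<in> V" "u' = f u" "v' = f v"
      using fV by (metis imageE)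
    with e deg have "u \<noteq> v" "gdeg V E u = p" "gdeg V E v = q" by auto
    with uv have "{u, v} \<in> deg_pairs V E p q"
      unfolding deg_pairs_def by blast
    moreover have "e = f ` {u, v}" using e uv by simp
    ultimately show "e \<in> (\<lambda>e. f ` e) ` deg_pairs V E p q" by (rule rev_image_eqI)
  qed
  show "(\<lambda>e. f ` e) ` deg_pairs V E p q \<subseteq> deg_pairs W E' p q"
  proof clarify
    fix e assume "e \<in> deg_pairs V E p q"
    then obtain u v where e: "e = {u, v}" "u \<in> V" "v \<in> V" "u \<noteq> v"
      "gdeg V E u = p" "gdeg V E v = q"
      unfolding deg_pairs_def by blast
    then have "f u \<noteq> f v" "gdeg W E' (f u) = p" "gdeg W E' (f v) = q" "f u \<in> W" "f v \<in> W"
      using inj deg fV by (auto dest: inj_on_contraD)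
    then show "f ` e \<in> deg_pairs W E' p q"
      unfolding deg_pairs_def e(1) image_insert image_empty by blast
  qed
qed

lemma base_poly_bij_betw:
  assumes bij: "bij_betw f V W" and adj: "\<And>x y. x \<in> V \<Longrightarrow> y \<in> V \<Longrightarrow> E' (f x) (f y) = E x y"
  shows "base_poly W E' p q = base_poly V E p q"
proof -
  have inj: "inj_on f V" using bij by (auto simp: bij_betw_def)
  have dist: "\<And>u v. u \<in> V \<Longrightarrow> v \<in> V \<Longrightarrow> gdist W E' (f u) (f v) = gdist V E u v"
    using gdist_bij_betw[of f V W E' E, OF bij adj] .
  have sub: "\<And>e. e \<in> deg_pairs V E p q \<Longrightarrow> e \<subseteq> V" unfolding deg_pairs_def by auto
  have pairs: "deg_pairs W E' p q = (\<lambda>e. f ` e) ` deg_pairs V E p q"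
    by (rule deg_pairs_bij_betw[where f = f and E' = E' and E = E, OF bij adj])
  have inj_img: "inj_on (\<lambda>e. f ` e) (deg_pairs V E p q)"
    by (rule inj_on_image, rule inj_on_subset[OF inj]) (use sub in blast)
  have same_dist: "(\<exists>u' v'. f ` e = {u', v'} \<and> k = gdist W E' u' v')
      \<longleftrightarrow> (\<exists>u v. e = {u, v} \<and> k = gdist V E u v)"
    if "e \<in> deg_pairs V E p q" for e k
  proof
    assume "\<exists>u' v'. f ` e = {u', v'} \<and> k = gdist W E' u' v'"
    then obtain u' v' where uv': "f ` e = {u', v'}" "k = gdist W E' u' v'" by blast
    then obtain u v where uv: "u \<in> e" "v \<in> e" "u' = f u" "v' = f v" by (metis imageE insertI1 insertI2)
    then have "f ` e = f ` {u, v}" using uv' by simp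
    moreover have "{u, v} \<subseteq> V" using uv sub[OF that] by auto
    ultimately have "e = {u, v}" using inj_on_image_eq_iff[OF inj sub[OF that]] by blast
    then show "\<exists>u v. e = {u, v} \<and> k = gdist V E u v"
      using uv uv' dist sub[OF that] by auto
  next
    assume "\<exists>u v. e = {u, v} \<and> k = gdist V E u v"
    then obtain u v where "e = {u, v}" "k = gdist V E u v" by blast
    then have "f ` e = {f u, f v}" "k = gdist W E' (f u) (f v)" using dist sub[OF that] by auto
    then show "\<exists>u' v'. f ` e = {u', v'} \<and> k = gdist W E' u' v'" by blast
  qed
  have "base_poly W E' p q = (\<Sum>e\<in>deg_pairs V E p q.
      monom 1 (THE k. \<exists>u' v'. f ` e = {u', v'} \<and> k = gdist W E' u' v'))"
    unfolding base_poly_def pairs sum.reindex[OF inj_img] by (simp only: comp_def)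
  also have "\<dots> = base_poly V E p q"
    unfolding base_poly_def
    by (intro sum.cong refl arg_cong[where f = "monom 1"] arg_cong[where f = The] ext same_dist)
  finally show ?thesis .
qed

lemma base_poly_eq_double_sum:
  assumes "p \<noteq> q"
    and sym: "\<And>x y. x \<in> V \<Longrightarrow> y \<in> V \<Longrightarrow> gdist V E x y = gdist V E y x"
  shows "base_poly V E p q =
    (\<Sum>x\<in>{v\<in>V. gdeg V E v = p}. \<Sum>y\<in>{v\<in>V. gdeg V E v = q}. monom 1 (gdist V E x y))"
proof -
  let ?A = "{v\<in>V. gdeg V E v = p}" and ?B = "{v\<in>V. gdeg V E v = q}"
  have pairs: "deg_pairs V E p q = (\<lambda>(x,y). {x,y}) ` (?A \<times> ?B)"
    unfolding deg_pairs_def using \<open>p \<noteq> q\<close> by auto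
  have inj: "inj_on (\<lambda>(x,y). {x,y}) (?A \<times> ?B)"
    using \<open>p \<noteq> q\<close> by (auto simp: inj_on_def doubleton_eq_iff)
  have "(THE k. \<exists>u v. {x,y} = {u, v} \<and> k = gdist V E u v) = gdist V E x y"
    if "(x,y) \<in> ?A \<times> ?B" for x y
    using that sym by (intro the_equality) (auto simp: doubleton_eq_iff)
  then have "base_poly V E p q = (\<Sum>(x,y)\<in>?A \<times> ?B. monom 1 (gdist V E x y))"
    unfolding base_poly_def pairs sum.reindex[OF inj] by (intro sum.cong) auto
  then show ?thesis by (simp add: sum.cartesian_product)
qed

definition ladder_verts :: "nat \<Rightarrow> (nat \<times> bool) set" where
  "ladder_verts m = {0..m} \<times> UNIV"

definition ladder_adj :: "nat \<times> bool \<Rightarrow> nat \<times> bool \<Rightarrow> bool" where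
  "ladder_adj x y \<longleftrightarrow>
     (snd x = snd y \<and> (fst y = Suc (fst x) \<or> fst x = Suc (fst y)))
   \<or> (snd x \<noteq> snd y \<and> fst x = fst y \<and> fst x mod 3 \<noteq> 2)"

definition absdiff :: "nat \<Rightarrow> nat \<Rightarrow> nat" where
  "absdiff p q = (p - q) + (q - p)"

(* A position without rung is crossed through the rung at a neighbouring position. *)
definition ladder_dist :: "nat \<times> bool \<Rightarrow> nat \<times> bool \<Rightarrow> nat" where
  "ladder_dist x y =
     (if snd x = snd y then absdiff (fst x) (fst y)
      else if fst x = fst y \<and> fst x mod 3 = 2 then 3
      else Suc (absdiff (fst x) (fst y)))"

lemma ladder_adj_commute: "ladder_adj x y \<longleftrightarrow> ladder_adj y x"
  unfolding ladder_adj_def by auto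

lemma ladder_dist_commute: "ladder_dist x y = ladder_dist y x"
  unfolding ladder_dist_def absdiff_def by auto

lemma ladder_dist_Lipschitz:
  assumes "ladder_adj y z"
  shows "ladder_dist x z \<le> ladder_dist x y + 1"
  using assms unfolding ladder_adj_def ladder_dist_def absdiff_def
  by (cases x; cases y; cases z) (auto split: if_splits)

lemma ladder_dist_descent:
  assumes m: "m mod 3 = 1" and x: "x \<in> ladder_verts m" and y: "y \<in> ladder_verts m"
    and "ladder_dist x y > 0"
  shows "\<exists>z\<in>ladder_verts m. ladder_adj z y \<and> ladder_dist x z + 1 = ladder_dist x y"
proof -
  obtain p r q s where xy: "x = (p, r)" "y = (q, s)" by (cases x; cases y)
  have "p \<le> m" "q \<le> m" using x y xy by (auto simp: ladder_verts_def)
  define toward where "toward = (if q < p then Suc q else q - 1)"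
  \<comment> \<open>Step from y towards x along the rail of y, except when this would end opposite the rung-free
     position of x; then step onto the rail of x instead.\<close>
  consider "s = r" "q \<noteq> p"
    | "s \<noteq> r" "q = p" "p mod 3 \<noteq> 2"
    | "s \<noteq> r" "q = p" "p mod 3 = 2"
    | "s \<noteq> r" "absdiff p q = 1" "p mod 3 = 2"
    | "s \<noteq> r" "q \<noteq> p" "\<not> (absdiff p q = 1 \<and> p mod 3 = 2)"
    using \<open>ladder_dist x y > 0\<close> xy by (auto simp: ladder_dist_def absdiff_def split: if_splits)
  then show ?thesis
  proof cases
    case 1
    then show ?thesis using xy \<open>p \<le> m\<close> \<open>q \<le> m\<close>
      by (intro bexI[of _ "(toward, s)"])
        (auto simp: toward_def ladder_verts_def ladder_adj_def ladder_dist_def absdiff_def)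
  next
    case 2
    then show ?thesis using xy \<open>p \<le> m\<close>
      by (intro bexI[of _ "(p, r)"]) (auto simp: ladder_verts_def ladder_adj_def ladder_dist_def absdiff_def)
  next
    case 3
    then have "p < m" using m \<open>p \<le> m\<close> by (cases "p = m") auto
    then show ?thesis using 3 xy
      by (intro bexI[of _ "(Suc p, s)"]) (auto simp: ladder_verts_def ladder_adj_def ladder_dist_def absdiff_def)
  next
    case 4
    then have "q mod 3 \<noteq> 2" unfolding absdiff_def by presburger
    then show ?thesis using 4 xy \<open>q \<le> m\<close>
      by (intro bexI[of _ "(q, r)"]) (auto simp: ladder_verts_def ladder_adj_def ladder_dist_def absdiff_def)
  next
    case 5
    then show ?thesis using xy \<open>p \<le> m\<close> \<open>q \<le> m\<close>
      by (intro bexI[of _ "(toward, s)"])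
        (auto simp: toward_def ladder_verts_def ladder_adj_def ladder_dist_def absdiff_def)
  qed
qed

lemma gdist_ladder:
  assumes "m mod 3 = 1" "x \<in> ladder_verts m" "y \<in> ladder_verts m"
  shows "gdist (ladder_verts m) ladder_adj x y = ladder_dist x y"
proof (rule gdist_eqI[OF assms(2,3)])
  show "ladder_dist x x = 0" by (simp add: ladder_dist_def absdiff_def)
  show "w = x" if "ladder_dist x w = 0" for w
    using that by (cases x; cases w) (auto simp: ladder_dist_def absdiff_def split: if_splits)
qed (use ladder_dist_Lipschitz ladder_dist_descent[OF assms(1,2)] in auto)

definition ladder_deg2 :: "nat \<Rightarrow> nat set" where
  "ladder_deg2 m = {p. p \<le> m \<and> (p = 0 \<or> p = m \<or> p mod 3 = 2)}"

definition ladder_deg3 :: "nat \<Rightarrow> nat set" where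
  "ladder_deg3 m = {p. 0 < p \<and> p < m \<and> p mod 3 \<noteq> 2}"

lemma gdeg_ladder:
  assumes m: "m mod 3 = 1" and "(p, r) \<in> ladder_verts m"
  shows "gdeg (ladder_verts m) ladder_adj (p, r) = (if p \<in> ladder_deg2 m then 2 else 3)"
proof -
  have "p \<le> m" "m \<noteq> 0" using assms by (auto simp: ladder_verts_def)
  then consider "p = 0" | "p = m" | "0 < p" "p < m" "p mod 3 = 2" | "0 < p" "p < m" "p mod 3 \<noteq> 2"
    by linarith
  then show ?thesis
  proof cases
    case 1
    then have "{v \<in> ladder_verts m. ladder_adj (p, r) v} = {(1, r), (0, \<not> r)}"
      using \<open>m \<noteq> 0\<close> by (auto simp: ladder_verts_def ladder_adj_def)
    then show ?thesis using 1 by (simp add: gdeg_def ladder_deg2_def)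
  next
    case 2
    then have "{v \<in> ladder_verts m. ladder_adj (p, r) v} = {(m - 1, r), (m, \<not> r)}"
      using \<open>m \<noteq> 0\<close> m by (auto simp: ladder_verts_def ladder_adj_def)
    then show ?thesis using 2 \<open>m \<noteq> 0\<close> by (simp add: gdeg_def ladder_deg2_def)
  next
    case 3
    then have "{v \<in> ladder_verts m. ladder_adj (p, r) v} = {(p - 1, r), (p + 1, r)}"
      by (auto simp: ladder_verts_def ladder_adj_def)
    then show ?thesis using 3 by (simp add: gdeg_def ladder_deg2_def)
  next
    case 4
    then have "{v \<in> ladder_verts m. ladder_adj (p, r) v} = {(p - 1, r), (p + 1, r), (p, \<not> r)}"
      by (auto simp: ladder_verts_def ladder_adj_def)
    then show ?thesis using 4 by (simp add: gdeg_def ladder_deg2_def)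
  qed
qed

lemma ladder_deg_classes:
  assumes "m mod 3 = 1"
  shows "{a \<in> ladder_verts m. gdeg (ladder_verts m) ladder_adj a = 2} = ladder_deg2 m \<times> UNIV"
    and "{a \<in> ladder_verts m. gdeg (ladder_verts m) ladder_adj a = 3} = ladder_deg3 m \<times> UNIV"
proof -
  have deg: "gdeg ({0..m} \<times> UNIV) ladder_adj (p, r) = (if p \<in> ladder_deg2 m then 2 else 3)"
    if "p \<le> m" for p r
    using gdeg_ladder[OF assms] that by (simp add: ladder_verts_def)
  have "0 < m" using assms by (intro gr0I) simp
  then show "{a \<in> ladder_verts m. gdeg (ladder_verts m) ladder_adj a = 2} = ladder_deg2 m \<times> UNIV"
    and "{a \<in> ladder_verts m. gdeg (ladder_verts m) ladder_adj a = 3} = ladder_deg3 m \<times> UNIV"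
    by (auto simp: ladder_verts_def deg ladder_deg2_def ladder_deg3_def split: if_splits)
qed

lemma sum_times_bool:
  "(\<Sum>x\<in>A \<times> (UNIV :: bool set). f x) = (\<Sum>a\<in>A. f (a, False) + f (a, True))"
proof -
  have "(\<Sum>x\<in>A \<times> (UNIV :: bool set). f x) = (\<Sum>a\<in>A. \<Sum>b\<in>UNIV. f (a, b))"
    by (simp add: sum.cartesian_product)
  then show ?thesis by (simp add: UNIV_bool)
qed

lemma pCons_const_mult_monom:
  "[:c, c:] * monom 1 d = monom c d + monom (c :: 'a :: comm_semiring_1) (Suc d)"
  by (simp add: monom_Suc smult_monom)

lemma base_poly_ladder:
  assumes m: "m mod 3 = 1"
  shows "base_poly (ladder_verts m) ladder_adj 2 3 =
    [:2, 2:] * (\<Sum>p\<in>ladder_deg2 m. \<Sum>q\<in>ladder_deg3 m. monom 1 (absdiff p q))"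
proof -
  have dist: "ladder_dist (p, r) (q, s) = (if r = s then absdiff p q else Suc (absdiff p q))"
    if "p \<in> ladder_deg2 m" "q \<in> ladder_deg3 m" for p q r s
    using that m by (auto simp: ladder_dist_def ladder_deg2_def ladder_deg3_def)
  have four: "monom 1 (ladder_dist (p, False) (q, False)) + monom 1 (ladder_dist (p, False) (q, True))
      + (monom 1 (ladder_dist (p, True) (q, False)) + monom 1 (ladder_dist (p, True) (q, True)))
      = [:2, 2:] * (monom 1 (absdiff p q) :: nat poly)"
    if "p \<in> ladder_deg2 m" "q \<in> ladder_deg3 m" for p q
  proof -
    have two: "monom 2 d = monom 1 d + (monom 1 d :: nat poly)" for d by (simp add: add_monom)
    show ?thesis unfolding pCons_const_mult_monom two using dist[OF that] by (simp add: ac_simps)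
  qed
  have "base_poly (ladder_verts m) ladder_adj 2 3 =
      (\<Sum>a\<in>ladder_deg2 m \<times> UNIV. \<Sum>b\<in>ladder_deg3 m \<times> UNIV.
         monom 1 (gdist (ladder_verts m) ladder_adj a b))"
    unfolding ladder_deg_classes[OF m, symmetric]
    by (rule base_poly_eq_double_sum) (simp_all add: gdist_ladder[OF m] ladder_dist_commute)
  also have "\<dots> = (\<Sum>a\<in>ladder_deg2 m \<times> UNIV. \<Sum>b\<in>ladder_deg3 m \<times> UNIV. monom 1 (ladder_dist a b))"
    by (intro sum.cong refl arg_cong[where f = "monom 1"] gdist_ladder[OF m])
      (auto simp: ladder_verts_def ladder_deg2_def ladder_deg3_def)
  also have "\<dots> = (\<Sum>p\<in>ladder_deg2 m. \<Sum>q\<in>ladder_deg3 m. [:2, 2:] * monom 1 (absdiff p q))"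
    unfolding sum_times_bool sum.distrib[symmetric] by (intro sum.cong refl four)
  finally show ?thesis by (simp add: sum_distrib_left)
qed

fun ladder_pos :: "nat \<Rightarrow> vtx \<Rightarrow> nat \<times> bool" where
  "ladder_pos n Pv = (0, True)"
| "ladder_pos n (Fv i) = (3 * i - 2, True)"
| "ladder_pos n (Av i) = (3 * i - 1, True)"
| "ladder_pos n (Bv i) = (3 * i, True)"
| "ladder_pos n Rv = (3 * n - 2, True)"
| "ladder_pos n Qv = (0, False)"
| "ladder_pos n (Ev i) = (3 * i - 2, False)"
| "ladder_pos n (Dv i) = (3 * i - 1, False)"
| "ladder_pos n (Cv i) = (3 * i, False)"
| "ladder_pos n Sv = (3 * n - 2, False)"

lemma mem_Lverts [simp]:
  "Av i \<in> Lverts n \<longleftrightarrow> 1 \<le> i \<and> i < n" "Bv i \<in> Lverts n \<longleftrightarrow> 1 \<le> i \<and> i < n"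
  "Cv i \<in> Lverts n \<longleftrightarrow> 1 \<le> i \<and> i < n" "Dv i \<in> Lverts n \<longleftrightarrow> 1 \<le> i \<and> i < n"
  "Ev i \<in> Lverts n \<longleftrightarrow> 1 \<le> i \<and> i < n" "Fv i \<in> Lverts n \<longleftrightarrow> 1 \<le> i \<and> i < n"
  "Pv \<in> Lverts n" "Qv \<in> Lverts n" "Rv \<in> Lverts n" "Sv \<in> Lverts n"
  by (auto simp: Lverts_def)

(* The Suc 0 variants are the simp normal forms of the others. *)

lemma mod_3_diff [simp]:
  "1 \<le> i \<Longrightarrow> (3 * i - 2) mod 3 = (1 :: nat)" "1 \<le> i \<Longrightarrow> (3 * i - Suc (Suc 0)) mod 3 = (1 :: nat)"
  "1 \<le> i \<Longrightarrow> (3 * i - 1) mod 3 = (2 :: nat)" "1 \<le> i \<Longrightarrow> (3 * i - Suc 0) mod 3 = (2 :: nat)"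
  by (cases i; simp add: mod_Suc)+

lemma Ladj_commute: "Ladj n u v \<longleftrightarrow> Ladj n v u"
  unfolding Ladj_def by auto

lemma Ladj_rail [simp]:
  "1 \<le> i \<Longrightarrow> i < n \<Longrightarrow> Ladj n (Fv i) (Av i)" "1 \<le> i \<Longrightarrow> i < n \<Longrightarrow> Ladj n (Av i) (Bv i)"
  "1 \<le> i \<Longrightarrow> i < n \<Longrightarrow> Ladj n (Ev i) (Dv i)" "1 \<le> i \<Longrightarrow> i < n \<Longrightarrow> Ladj n (Dv i) (Cv i)"
  "1 \<le> i \<Longrightarrow> Suc i < n \<Longrightarrow> Ladj n (Bv i) (Fv (Suc i))"
  "1 \<le> i \<Longrightarrow> Suc i < n \<Longrightarrow> Ladj n (Cv i) (Ev (Suc i))"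
  "Suc i = n \<Longrightarrow> Ladj n (Bv i) Rv" "Suc i = n \<Longrightarrow> Ladj n (Cv i) Sv"
  "Ladj n Pv (Fv (Suc 0))" "Ladj n Qv (Ev (Suc 0))"
  unfolding Ladj_def Ledges_def by force+

lemma Ladj_rung [simp]:
  "1 \<le> i \<Longrightarrow> i < n \<Longrightarrow> Ladj n (Bv i) (Cv i)" "1 \<le> i \<Longrightarrow> i < n \<Longrightarrow> Ladj n (Cv i) (Bv i)"
  "1 \<le> i \<Longrightarrow> i < n \<Longrightarrow> Ladj n (Fv i) (Ev i)" "1 \<le> i \<Longrightarrow> i < n \<Longrightarrow> Ladj n (Ev i) (Fv i)"
  "Ladj n Pv Qv" "Ladj n Qv Pv" "Ladj n Rv Sv" "Ladj n Sv Rv"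
  unfolding Ladj_def Ledges_def by force+

lemma Ledges_ladder_adj:
  assumes "n \<ge> 2" "(u, v) \<in> Ledges n"
  shows "ladder_adj (ladder_pos n u) (ladder_pos n v)"
  using assms unfolding Ledges_def by (auto simp: ladder_adj_def)

fun rail_next :: "nat \<Rightarrow> vtx \<Rightarrow> vtx" where
  "rail_next n Pv = Fv 1"
| "rail_next n (Fv i) = Av i"
| "rail_next n (Av i) = Bv i"
| "rail_next n (Bv i) = (if Suc i < n then Fv (Suc i) else Rv)"
| "rail_next n Qv = Ev 1"
| "rail_next n (Ev i) = Dv i"
| "rail_next n (Dv i) = Cv i"
| "rail_next n (Cv i) = (if Suc i < n then Ev (Suc i) else Sv)"
| "rail_next n Rv = Rv"  (* junk: r and s end the rails *)
| "rail_next n Sv = Sv"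

fun opposite :: "vtx \<Rightarrow> vtx" where
  "opposite Pv = Qv" | "opposite Qv = Pv" | "opposite Rv = Sv" | "opposite Sv = Rv"
| "opposite (Av i) = Dv i" | "opposite (Dv i) = Av i" | "opposite (Bv i) = Cv i"
| "opposite (Cv i) = Bv i" | "opposite (Ev i) = Fv i" | "opposite (Fv i) = Ev i"

lemma ladder_pos_rail_next:
  assumes "n \<ge> 2" "u \<in> Lverts n" "fst (ladder_pos n u) < 3 * n - 2"
  shows "rail_next n u \<in> Lverts n" "Ladj n u (rail_next n u)"
    and "ladder_pos n (rail_next n u) = (Suc (fst (ladder_pos n u)), snd (ladder_pos n u))"
  using assms by (cases u; auto)+

lemma ladder_pos_opposite:
  assumes "u \<in> Lverts n"
  shows "opposite u \<in> Lverts n"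
    and "ladder_pos n (opposite u) = (fst (ladder_pos n u), \<not> snd (ladder_pos n u))"
    and "fst (ladder_pos n u) mod 3 \<noteq> 2 \<Longrightarrow> Ladj n u (opposite u)"
  using assms by (cases u; auto)+

lemma ladder_pos_in_ladder_verts:
  "n \<ge> 2 \<Longrightarrow> u \<in> Lverts n \<Longrightarrow> ladder_pos n u \<in> ladder_verts (3 * n - 2)"
  by (cases u) (auto simp: ladder_verts_def)

lemma ladder_pos_eqD:
  "n \<ge> 2 \<Longrightarrow> u \<in> Lverts n \<Longrightarrow> v \<in> Lverts n \<Longrightarrow> ladder_pos n u = ladder_pos n v \<Longrightarrow> u = v"
  by (cases u; cases v) (simp_all, presburger+)

lemma inj_on_ladder_pos: "n \<ge> 2 \<Longrightarrow> inj_on (ladder_pos n) (Lverts n)"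
  using ladder_pos_eqD by (blast intro: inj_onI)

lemma ladder_pos_surj:
  assumes "n \<ge> 2" "(p, r) \<in> ladder_verts (3 * n - 2)"
  shows "(p, r) \<in> ladder_pos n ` Lverts n"
proof -
  have "p \<le> 3 * n - 2" using assms(2) by (simp add: ladder_verts_def)
  then consider "p = 0" | "p = 3 * n - 2" | "0 < p" "p < 3 * n - 2" "p mod 3 = 1"
    | "0 < p" "p < 3 * n - 2" "p mod 3 = 2" | "0 < p" "p < 3 * n - 2" "p mod 3 = 0"
    by linarith
  then show ?thesis
  proof cases
    case 1
    then show ?thesis by (intro rev_image_eqI[of "if r then Pv else Qv"]) auto
  next
    case 2
    then show ?thesis by (intro rev_image_eqI[of "if r then Rv else Sv"]) auto
  next
    case 3
    then have "3 * ((p + 2) div 3) - 2 = p" "1 \<le> (p + 2) div 3" "(p + 2) div 3 < n" by presburger+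
    then show ?thesis by (intro rev_image_eqI[of "(if r then Fv else Ev) ((p + 2) div 3)"]) auto
  next
    case 4
    then have "3 * ((p + 1) div 3) - 1 = p" "1 \<le> (p + 1) div 3" "(p + 1) div 3 < n" by presburger+
    then show ?thesis by (intro rev_image_eqI[of "(if r then Av else Dv) ((p + 1) div 3)"]) auto
  next
    case 5
    then have "3 * (p div 3) = p" "1 \<le> p div 3" "p div 3 < n" by presburger+
    then show ?thesis by (intro rev_image_eqI[of "(if r then Bv else Cv) (p div 3)"]) auto
  qed
qed

lemma bij_betw_ladder_pos:
  assumes "n \<ge> 2"
  shows "bij_betw (ladder_pos n) (Lverts n) (ladder_verts (3 * n - 2))"
proof (rule bij_betw_imageI)
  show "inj_on (ladder_pos n) (Lverts n)" using inj_on_ladder_pos[OF assms] .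
  show "ladder_pos n ` Lverts n = ladder_verts (3 * n - 2)"
    using ladder_pos_in_ladder_verts[OF assms] ladder_pos_surj[OF assms] by auto
qed

lemma Ladj_rail_step:
  assumes "n \<ge> 2" "u \<in> Lverts n" "v \<in> Lverts n"
    and "ladder_pos n v = (Suc (fst (ladder_pos n u)), snd (ladder_pos n u))"
  shows "Ladj n u v"
proof -
  have "fst (ladder_pos n u) < 3 * n - 2"
    using ladder_pos_in_ladder_verts[OF assms(1,3)] assms(4) by (simp add: ladder_verts_def)
  then have "ladder_pos n (rail_next n u) = ladder_pos n v" "rail_next n u \<in> Lverts n"
    using ladder_pos_rail_next[OF assms(1,2)] assms(4) by auto
  then have "rail_next n u = v" using ladder_pos_eqD[OF assms(1) _ assms(3)] by blast
  then show ?thesis using ladder_pos_rail_next[OF assms(1,2)] \<open>fst (ladder_pos n u) < 3 * n - 2\<close> by simp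
qed

lemma ladder_adj_ladder_pos_iff:
  assumes "n \<ge> 2" "u \<in> Lverts n" "v \<in> Lverts n"
  shows "ladder_adj (ladder_pos n u) (ladder_pos n v) \<longleftrightarrow> Ladj n u v"
proof
  assume "Ladj n u v"
  then show "ladder_adj (ladder_pos n u) (ladder_pos n v)"
    unfolding Ladj_def using Ledges_ladder_adj[OF assms(1)] ladder_adj_commute by blast
next
  assume adj: "ladder_adj (ladder_pos n u) (ladder_pos n v)"
  obtain p r q s where pos: "ladder_pos n u = (p, r)" "ladder_pos n v = (q, s)" by fastforce
  consider "s = r" "q = Suc p" | "s = r" "p = Suc q" | "s \<noteq> r" "q = p" "p mod 3 \<noteq> 2"
    using adj pos unfolding ladder_adj_def by auto
  then show "Ladj n u v"
  proof cases
    case 1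
    then show ?thesis using Ladj_rail_step[OF assms] pos by simp
  next
    case 2
    then show ?thesis using Ladj_rail_step[OF assms(1,3,2)] pos Ladj_commute by simp
  next
    case 3
    then have "opposite u = v"
      using ladder_pos_eqD[OF assms(1) ladder_pos_opposite(1)[OF assms(2)] assms(3)]
        ladder_pos_opposite(2)[OF assms(2)] pos
      by simp
    then show ?thesis using ladder_pos_opposite[OF assms(2)] 3 pos by simp
  qed
qed

lemma ladder_deg2_deg3_disjoint: "p \<in> ladder_deg2 m \<Longrightarrow> q \<in> ladder_deg3 m \<Longrightarrow> p \<noteq> q"
  unfolding ladder_deg2_def ladder_deg3_def by auto

lemma mod_3_reflect:
  assumes "m mod 3 = (1::nat)" "p \<le> m"
  shows "(m - p) mod 3 = (if p mod 3 = 0 then 1 else if p mod 3 = 1 then 0 else 2)"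
proof -
  have m: "m = 3 * (m div 3) + 1" and p: "p = 3 * (p div 3) + p mod 3"
    using div_mult_mod_eq[of m 3] div_mult_mod_eq[of p 3] assms(1) by linarith+
  have "p mod 3 < 3" by simp
  then consider "p mod 3 = 0" | "p mod 3 = 1" | "p mod 3 = 2" by linarith
  then show ?thesis
  proof cases
    case 1
    then have "m - p = 3 * (m div 3 - p div 3) + 1" using m p assms(2) by linarith
    then show ?thesis using 1 by simp
  next
    case 2
    then have "m - p = 3 * (m div 3 - p div 3)" using m p assms(2) by linarith
    then show ?thesis using 2 by simp
  next
    case 3
    then have "m - p = 3 * (m div 3 - p div 3 - 1) + 2" using m p assms(2) by linarith
    then show ?thesis using 3 by (simp add: mod_Suc)
  qed
qed

lemma ladder_deg2_reflect: "m mod 3 = 1 \<Longrightarrow> p \<in> ladder_deg2 m \<Longrightarrow> m - p \<in> ladder_deg2 m"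
  using mod_3_reflect[of m p] unfolding ladder_deg2_def by auto

lemma ladder_deg3_reflect: "m mod 3 = 1 \<Longrightarrow> q \<in> ladder_deg3 m \<Longrightarrow> m - q \<in> ladder_deg3 m"
  using mod_3_reflect[of m q] unfolding ladder_deg3_def by auto

definition ladder_deg2_below :: "nat \<Rightarrow> nat set" where
  "ladder_deg2_below q = {p. p < q \<and> (p = 0 \<or> p mod 3 = 2)}"

lemma ladder_deg2_below_eq: "q \<in> ladder_deg3 m \<Longrightarrow> ladder_deg2_below q = {p \<in> ladder_deg2 m. p < q}"
  by (auto simp: ladder_deg2_below_def ladder_deg2_def ladder_deg3_def)

lemma finite_ladder_deg2 [simp]: "finite (ladder_deg2 m)"
  by (rule finite_subset[of _ "{..m}"]) (auto simp: ladder_deg2_def)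

lemma finite_ladder_deg3 [simp]: "finite (ladder_deg3 m)"
  by (rule finite_subset[of _ "{..m}"]) (auto simp: ladder_deg3_def)

lemma sum_ladder_above_eq_below:
  assumes m: "m mod 3 = 1"
  shows "(\<Sum>q\<in>ladder_deg3 m. \<Sum>p | p \<in> ladder_deg2 m \<and> q < p. g (p - q))
    = (\<Sum>q\<in>ladder_deg3 m. \<Sum>p\<in>ladder_deg2_below q. g (q - p))"
proof -
  define above where "above q = {p \<in> ladder_deg2 m. q < p}" for q
  have le: "p \<le> m" if "p \<in> ladder_deg2 m \<or> p \<in> ladder_deg3 m" for p
    using that by (auto simp: ladder_deg2_def ladder_deg3_def)
  have "(\<Sum>q\<in>ladder_deg3 m. \<Sum>p\<in>above q. g (p - q)) = (\<Sum>(q, p)\<in>Sigma (ladder_deg3 m) above. g (p - q))"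
    by (intro sum.Sigma) (auto simp: above_def)
  also have "\<dots> = (\<Sum>(q, p)\<in>Sigma (ladder_deg3 m) ladder_deg2_below. g (q - p))"
  proof (rule sum.reindex_bij_witness[of _ "\<lambda>(q, p). (m - q, m - p)" "\<lambda>(q, p). (m - q, m - p)"])
    fix a assume "a \<in> Sigma (ladder_deg3 m) above"
    then obtain q p where a: "a = (q, p)" and q: "q \<in> ladder_deg3 m" and p: "p \<in> ladder_deg2 m" "q < p"
      by (auto simp: above_def)
    have "p \<le> m" using le p by blast
    have "m - p \<in> ladder_deg2_below (m - q)"
      unfolding ladder_deg2_below_eq[OF ladder_deg3_reflect[OF m q]]
      using ladder_deg2_reflect[OF m p(1)] p(2) \<open>p \<le> m\<close> by auto
    then show "(\<lambda>(q, p). (m - q, m - p)) ((\<lambda>(q, p). (m - q, m - p)) a) = a"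
      and "(\<lambda>(q, p). (m - q, m - p)) a \<in> Sigma (ladder_deg3 m) ladder_deg2_below"
      and "(\<lambda>(q, p). g (q - p)) ((\<lambda>(q, p). (m - q, m - p)) a) = (\<lambda>(q, p). g (p - q)) a"
      using a q p \<open>p \<le> m\<close> ladder_deg3_reflect[OF m q] by auto
  next
    fix b assume "b \<in> Sigma (ladder_deg3 m) ladder_deg2_below"
    then obtain q p where "b = (q, p)" "q \<in> ladder_deg3 m" "p \<in> ladder_deg2 m" "p < q"
      by (auto simp: ladder_deg2_below_eq)
    moreover have "q \<le> m" using le calculation by blast
    ultimately show "(\<lambda>(q, p). (m - q, m - p)) ((\<lambda>(q, p). (m - q, m - p)) b) = b"
      and "(\<lambda>(q, p). (m - q, m - p)) b \<in> Sigma (ladder_deg3 m) above"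
      using ladder_deg2_reflect[OF m] ladder_deg3_reflect[OF m] by (auto simp: above_def)
  qed
  also have "\<dots> = (\<Sum>q\<in>ladder_deg3 m. \<Sum>p\<in>ladder_deg2_below q. g (q - p))"
    by (intro sum.Sigma[symmetric]) (auto simp: ladder_deg2_below_def)
  finally show ?thesis unfolding above_def .
qed

lemma sum_ladder_absdiff:
  fixes g :: "nat \<Rightarrow> 'a :: comm_monoid_add"
  assumes m: "m mod 3 = 1"
  defines "S \<equiv> (\<Sum>q\<in>ladder_deg3 m. \<Sum>p\<in>ladder_deg2_below q. g (q - p))"
  shows "(\<Sum>p\<in>ladder_deg2 m. \<Sum>q\<in>ladder_deg3 m. g (absdiff p q)) = S + S"
proof -
  have inner: "(\<Sum>p\<in>ladder_deg2 m. g (absdiff p q))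
      = (\<Sum>p\<in>ladder_deg2_below q. g (q - p)) + (\<Sum>p | p \<in> ladder_deg2 m \<and> q < p. g (p - q))"
    if q: "q \<in> ladder_deg3 m" for q
  proof -
    have "p < q \<or> q < p" if "p \<in> ladder_deg2 m" for p
      using ladder_deg2_deg3_disjoint[OF that q] by arith
    then have split: "ladder_deg2_below q \<union> {p \<in> ladder_deg2 m. q < p} = ladder_deg2 m"
      unfolding ladder_deg2_below_eq[OF q] by auto
    have "(\<Sum>p\<in>ladder_deg2_below q \<union> {p \<in> ladder_deg2 m. q < p}. g (absdiff p q))
        = (\<Sum>p\<in>ladder_deg2_below q. g (absdiff p q)) + (\<Sum>p | p \<in> ladder_deg2 m \<and> q < p. g (absdiff p q))"
      by (rule sum.union_disjoint) (auto simp: ladder_deg2_below_eq[OF q])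
    then have "(\<Sum>p\<in>ladder_deg2 m. g (absdiff p q))
        = (\<Sum>p\<in>ladder_deg2_below q. g (absdiff p q)) + (\<Sum>p | p \<in> ladder_deg2 m \<and> q < p. g (absdiff p q))"
      unfolding split .
    also have "\<dots> = (\<Sum>p\<in>ladder_deg2_below q. g (q - p)) + (\<Sum>p | p \<in> ladder_deg2 m \<and> q < p. g (p - q))"
      by (intro arg_cong2[where f = "(+)"] sum.cong refl) (auto simp: ladder_deg2_below_def absdiff_def)
    finally show ?thesis .
  qed
  have "(\<Sum>p\<in>ladder_deg2 m. \<Sum>q\<in>ladder_deg3 m. g (absdiff p q))
      = (\<Sum>q\<in>ladder_deg3 m. \<Sum>p\<in>ladder_deg2 m. g (absdiff p q))"
    by (rule sum.swap)
  also have "\<dots> = S + (\<Sum>q\<in>ladder_deg3 m. \<Sum>p | p \<in> ladder_deg2 m \<and> q < p. g (p - q))"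
    unfolding S_def sum.distrib[symmetric] by (intro sum.cong refl inner)
  finally show ?thesis unfolding sum_ladder_above_eq_below[OF m] S_def .
qed

lemma sum_ladder_deg2_below:
  fixes g :: "nat \<Rightarrow> 'a :: comm_monoid_add"
  assumes "0 < q" "q = 3 * k + r" "r \<le> 1"
  shows "(\<Sum>p\<in>ladder_deg2_below q. g (q - p)) = g q + (\<Sum>i = 1..k. g (3 * i + r - 2))"
proof -
  have "ladder_deg2_below q = insert 0 {p. p < q \<and> p mod 3 = 2}"
    using assms(1) by (auto simp: ladder_deg2_below_def)
  then have "(\<Sum>p\<in>ladder_deg2_below q. g (q - p)) = g q + (\<Sum>p | p < q \<and> p mod 3 = 2. g (q - p))"
    by (simp add: sum.insert)
  also have "(\<Sum>p | p < q \<and> p mod 3 = 2. g (q - p)) = (\<Sum>i = 1..k. g (3 * i + r - 2))"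
  proof (rule sum.reindex_bij_witness[where i = "\<lambda>i. 3 * (k - i) + 2" and j = "\<lambda>p. k - p div 3"])
    fix i assume "i \<in> {1..k}"
    then show "k - (3 * (k - i) + 2) div 3 = i" and "3 * (k - i) + 2 \<in> {p. p < q \<and> p mod 3 = 2}"
      using assms by (auto simp: mod_Suc)
  next
    fix p assume "p \<in> {p. p < q \<and> p mod 3 = 2}"
    then have "p < q" "p mod 3 = 2" by auto
    moreover have "p = 3 * (p div 3) + p mod 3" by simp
    ultimately have "p = 3 * (p div 3) + 2" "p div 3 < k" using assms by linarith+
    then show "3 * (k - (k - p div 3)) + 2 = p" and "k - p div 3 \<in> {1..k}" by auto
    show "g (3 * (k - p div 3) + r - 2) = g (q - p)"
      using assms \<open>p = 3 * (p div 3) + 2\<close> \<open>p div 3 < k\<close> by (intro arg_cong[where f = g]) linarith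
  qed
  finally show ?thesis .
qed

lemma sum_ladder_deg3_Suc:
  assumes "n \<ge> 1"
  shows "(\<Sum>q\<in>ladder_deg3 (3 * Suc n - 2). F q) = F (3 * n - 2) + F (3 * n) + (\<Sum>q\<in>ladder_deg3 (3 * n - 2). F q)"
proof -
  have old: "p < 3 * n - 2" if "p < 3 * n + 1" "p mod 3 \<noteq> 2" "p \<noteq> 3 * n - 2" "p \<noteq> 3 * n" for p
  proof -
    have "p \<noteq> 3 * n - 1" using that(2) assms by auto
    then show ?thesis using that by linarith
  qed
  have "ladder_deg3 (3 * Suc n - 2) = insert (3 * n - 2) (insert (3 * n) (ladder_deg3 (3 * n - 2)))"
    using assms unfolding ladder_deg3_def by (auto intro: old)
  moreover have "3 * n - 2 \<notin> insert (3 * n) (ladder_deg3 (3 * n - 2))" "3 * n \<notin> ladder_deg3 (3 * n - 2)"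
    using assms by (auto simp: ladder_deg3_def)
  ultimately show ?thesis by (simp add: add.assoc)
qed

definition H23_formula :: "nat \<Rightarrow> nat poly" where
  "H23_formula n =
     monom (4 * n) 1
   + (\<Sum>k = 2..n-1. monom (4 * (n - k + 2)) (3 * k - 2))
   + (\<Sum>k = 1..n-1. monom (4 * (2 * n - 2 * k)) (3 * k - 1))
   + (\<Sum>k = 1..n-1. monom (4 * (n - k)) (3 * k))
   + monom 4 (3 * n - 2)"

lemma sum_monom_split_last:
  fixes a n :: nat
  assumes "1 \<le> a" "a \<le> n" and "\<And>k. a \<le> k \<Longrightarrow> k < n \<Longrightarrow> c k = c' k + d"
  shows "(\<Sum>k = a..n. monom (c k) (e k)) =
    (\<Sum>k = a..n - 1. monom (c' k) (e k)) + (\<Sum>k = a..n - 1. monom d (e k))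
    + (monom (c n) (e n) :: 'a :: comm_semiring_1 poly)"
proof -
  have "{a..n} = insert n {a..n - 1}" "n \<notin> {a..n - 1}" using assms(1,2) by auto
  then have "(\<Sum>k = a..n. monom (c k) (e k)) = monom (c n) (e n) + (\<Sum>k = a..n - 1. monom (c k) (e k))"
    by simp
  also have "(\<Sum>k = a..n - 1. monom (c k) (e k)) = (\<Sum>k = a..n - 1. monom (c' k) (e k) + monom d (e k))"
    using assms by (intro sum.cong refl) (auto simp: add_monom)
  finally show ?thesis by (simp add: sum.distrib ac_simps)
qed

definition H23_increment :: "nat \<Rightarrow> nat poly" where
  "H23_increment n =
     monom 4 1 + (\<Sum>k = 2..n - 1. monom 4 (3 * k - 2)) + monom 8 (3 * n - 2)
   + (\<Sum>k = 1..n - 1. monom 8 (3 * k - 1)) + monom 8 (3 * n - 1)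
   + (\<Sum>k = 1..n - 1. monom 4 (3 * k)) + monom 4 (3 * n) + monom 4 (3 * n + 1)"

lemma H23_formula_Suc:
  assumes "n \<ge> 2"
  shows "H23_formula (Suc n) = H23_formula n + H23_increment n"
proof -
  have "(\<Sum>k = 2..n. monom (4 * (Suc n - k + 2)) (3 * k - 2)) =
      (\<Sum>k = 2..n - 1. monom (4 * (n - k + 2)) (3 * k - 2)) + (\<Sum>k = 2..n - 1. monom 4 (3 * k - 2))
      + monom (4 * (Suc n - n + 2)) (3 * n - 2)"
    by (rule sum_monom_split_last) (use assms in auto)
  moreover have "(\<Sum>k = 1..n. monom (4 * (2 * Suc n - 2 * k)) (3 * k - 1)) =
      (\<Sum>k = 1..n - 1. monom (4 * (2 * n - 2 * k)) (3 * k - 1)) + (\<Sum>k = 1..n - 1. monom 8 (3 * k - 1))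
      + monom (4 * (2 * Suc n - 2 * n)) (3 * n - 1)"
    by (rule sum_monom_split_last) (use assms in auto)
  moreover have "(\<Sum>k = 1..n. monom (4 * (Suc n - k)) (3 * k)) =
      (\<Sum>k = 1..n - 1. monom (4 * (n - k)) (3 * k)) + (\<Sum>k = 1..n - 1. monom 4 (3 * k))
      + monom (4 * (Suc n - n)) (3 * n)"
    by (rule sum_monom_split_last) (use assms in auto)
  moreover have "monom (4 * Suc n) 1 = monom (4 * n) 1 + (monom 4 1 :: nat poly)"
    and "monom 12 (3 * n - 2) = monom 4 (3 * n - 2) + (monom 8 (3 * n - 2) :: nat poly)"
    by (simp_all add: add_monom)
  ultimately show ?thesis
    unfolding H23_formula_def H23_increment_def by (simp add: ac_simps)
qed

lemma pCons_const_mult_sum_monom: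
  "[:c, c:] * (\<Sum>i\<in>I. monom 1 (e i))
    = (\<Sum>i\<in>I. monom c (e i)) + (\<Sum>i\<in>I. monom (c :: 'a :: comm_semiring_1) (Suc (e i)))"
  by (simp only: sum_distrib_left pCons_const_mult_monom sum.distrib)

lemma H23_increment_eq:
  assumes "n \<ge> 2"
  shows "[:4, 4:] * (monom 1 (3 * n - 2) + (\<Sum>i = 1..n - 1. monom 1 (3 * i - 1))
      + (monom 1 (3 * n) + (\<Sum>i = 1..n. monom 1 (3 * i - 2)))) = H23_increment n"
proof -
  define A where "A = (\<Sum>k = 2..n - 1. monom 4 (3 * k - 2) :: nat poly)"
  define B where "B = (\<Sum>k = 1..n - 1. monom 4 (3 * k - 1) :: nat poly)"
  define C where "C = (\<Sum>k = 1..n - 1. monom 4 (3 * k) :: nat poly)"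
  define E1 where "E1 = (monom 4 (3 * n - 2) :: nat poly)"
  define E2 where "E2 = (monom 4 (3 * n - 1) :: nat poly)"
  define E3 where "E3 = (monom 4 (3 * n) :: nat poly)"
  define E4 where "E4 = (monom 4 (3 * n + 1) :: nat poly)"
  have last: "(\<Sum>k = 1..n. f k) = (\<Sum>k = 1..n - 1. f k) + f n" for f :: "nat \<Rightarrow> nat poly"
  proof -
    have "{1..n} = insert n {1..n - 1}" using assms by auto
    then show ?thesis using assms by (simp add: add.commute)
  qed
  have first: "(\<Sum>k = 1..n - 1. f k) = f 1 + (\<Sum>k = 2..n - 1. f k)" for f :: "nat \<Rightarrow> nat poly"
    using assms by (simp add: sum.atLeast_Suc_atMost numeral_2_eq_2)
  have "Suc (3 * n - 2) = 3 * n - 1" using assms by simp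
  then have t1: "[:4, 4:] * monom 1 (3 * n - 2) = E1 + E2"
    unfolding pCons_const_mult_monom E1_def E2_def by simp
  have "(\<Sum>i = 1..n - 1. monom 4 (Suc (3 * i - 1))) = C"
    unfolding C_def by (intro sum.cong refl arg_cong[where f = "monom 4"]) auto
  then have t2: "[:4, 4:] * (\<Sum>i = 1..n - 1. monom 1 (3 * i - 1)) = B + C"
    unfolding pCons_const_mult_sum_monom B_def by simp
  have t3: "[:4, 4:] * monom 1 (3 * n) = E3 + E4"
    unfolding pCons_const_mult_monom E3_def E4_def by simp
  have "(\<Sum>i = 1..n. monom 4 (Suc (3 * i - 2))) = (\<Sum>i = 1..n. monom 4 (3 * i - 1) :: nat poly)"
    by (intro sum.cong refl arg_cong[where f = "monom 4"]) auto
  also have "\<dots> = B + E2" unfolding B_def E2_def by (rule last)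
  finally have t4: "[:4, 4:] * (\<Sum>i = 1..n. monom 1 (3 * i - 2)) = monom 4 1 + A + E1 + (B + E2)"
    unfolding pCons_const_mult_sum_monom last[of "\<lambda>i. monom 4 (3 * i - 2)"] first A_def E1_def
    by (simp add: ac_simps)
  have "monom 8 d = monom 4 d + (monom 4 d :: nat poly)" for d
    by (simp add: add_monom)
  then have "H23_increment n = monom 4 1 + A + E1 + E1 + B + B + E2 + E2 + C + E3 + E4"
    unfolding H23_increment_def A_def B_def C_def E1_def E2_def E3_def E4_def
    by (simp add: sum.distrib ac_simps)
  then show ?thesis unfolding distrib_left t1 t2 t3 t4 by (simp only: ac_simps)
qed

lemma ladder_lower_sum_eq_H23_formula:
  assumes "n \<ge> 2"
  shows "[:4, 4:] * (\<Sum>q\<in>ladder_deg3 (3 * n - 2). \<Sum>p\<in>ladder_deg2_below q. monom 1 (q - p))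
    = H23_formula n"
  using assms
proof (induction n rule: nat_induct_at_least)
  case base
  define F where "F q = (\<Sum>p\<in>ladder_deg2_below q. monom 1 (q - p) :: nat poly)" for q
  have "ladder_deg3 (3 * 2 - 2) = {1, 3}"
    unfolding ladder_deg3_def by auto presburger
  moreover have "F 1 = monom 1 1"
    using sum_ladder_deg2_below[of 1 0 1 "\<lambda>d. monom 1 d :: nat poly"] unfolding F_def by simp
  moreover have "F 3 = monom 1 3 + monom 1 1"
    using sum_ladder_deg2_below[of 3 1 0 "\<lambda>d. monom 1 d :: nat poly"] unfolding F_def by simp
  ultimately have "[:4, 4:] * sum F (ladder_deg3 (3 * 2 - 2))
      = [:4, 4:] * monom 1 1 + [:4, 4:] * monom 1 3 + [:4, 4:] * monom 1 1"
    by (simp add: distrib_left ac_simps)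
  also have "\<dots> = monom 4 1 + monom 4 2 + (monom 4 3 + monom 4 4) + (monom 4 1 + monom 4 2)"
    unfolding pCons_const_mult_monom by (simp add: numeral_eq_Suc)
  also have "\<dots> = H23_formula 2"
  proof -
    have "monom 8 d = monom 4 d + (monom 4 d :: nat poly)" for d by (simp add: add_monom)
    then show ?thesis unfolding H23_formula_def by (simp add: ac_simps)
  qed
  finally show ?case unfolding F_def .
next
  case (Suc n)
  define F where "F q = (\<Sum>p\<in>ladder_deg2_below q. monom 1 (q - p) :: nat poly)" for q
  have "F (3 * n - 2) = monom 1 (3 * n - 2) + (\<Sum>i = 1..n - 1. monom 1 (3 * i + 1 - 2))"
    unfolding F_def by (rule sum_ladder_deg2_below) (use Suc.hyps in auto)
  moreover have "F (3 * n) = monom 1 (3 * n) + (\<Sum>i = 1..n. monom 1 (3 * i + 0 - 2))"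
    unfolding F_def by (rule sum_ladder_deg2_below) (use Suc.hyps in auto)
  moreover have "sum F (ladder_deg3 (3 * Suc n - 2)) = F (3 * n - 2) + F (3 * n) + sum F (ladder_deg3 (3 * n - 2))"
    by (rule sum_ladder_deg3_Suc) (use Suc.hyps in simp)
  ultimately show ?case
    using Suc.IH H23_formula_Suc[OF Suc.hyps] H23_increment_eq[OF Suc.hyps]
    unfolding F_def by (simp add: distrib_left ac_simps)
qed

theorem theorem2p5:
  fixes n :: nat
  assumes "n \<ge> 2"
  shows "base_poly (Lverts n) (Ladj n) 2 3 =
           monom (4 * n) 1
         + (\<Sum>k = 2..n-1. monom (4 * (n - k + 2)) (3 * k - 2))
         + (\<Sum>k = 1..n-1. monom (4 * (2 * n - 2 * k)) (3 * k - 1))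
         + (\<Sum>k = 1..n-1. monom (4 * (n - k)) (3 * k))
         + monom 4 (3 * n - 2)"
proof -
  have m: "(3 * n - 2) mod 3 = 1" using assms by simp
  define S where "S = (\<Sum>q\<in>ladder_deg3 (3 * n - 2). \<Sum>p\<in>ladder_deg2_below q. monom 1 (q - p) :: nat poly)"
  have "base_poly (Lverts n) (Ladj n) 2 3 = base_poly (ladder_verts (3 * n - 2)) ladder_adj 2 3"
    using base_poly_bij_betw[where f = "ladder_pos n" and E' = ladder_adj and E = "Ladj n",
        OF bij_betw_ladder_pos[OF assms] ladder_adj_ladder_pos_iff[OF assms]] ..
  also have "\<dots> = [:2, 2:] * (S + S)"
    unfolding base_poly_ladder[OF m] sum_ladder_absdiff[OF m] S_def ..
  also have "\<dots> = [:4, 4:] * S"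
  proof -
    have "[:4, 4:] = [:2, 2:] + ([:2, 2:] :: nat poly)" by simp
    then show ?thesis by (simp only: distrib_left distrib_right)
  qed
  also have "\<dots> = H23_formula n"
    unfolding S_def by (rule ladder_lower_sum_eq_H23_formula[OF assms])
  finally show ?thesis unfolding H23_formula_def .
qed

end
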